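(* Let $p$ be a prime with $p\equiv\pm1\pmod{10}$ and $n$ an integer such that $\mathcal{S}_{p,n}:=p^2 16^n+1$ is prime. Let $E$ be the elliptic curve $y^2=x^3-x$ and $E_{30}$ the elliptic curve $30y^2=x^3-x$. Then $E_{30}(\mathbb{F}_{\mathcal{S}_{p,n}})\cong E(\mathbb{F}_{\mathcal{S}_{p,n}})$ (indeed $30$ is a square modulo $\mathcal{S}_{p,n}$, so $E_{30}\cong E$ over $\mathbb{F}_{\mathcal{S}_{p,n}}$). *)

theory Defs
  imports "HOL-Algebra.Group" "HOL-Computational_Algebra.Primes" "HOL-Library.Cardinality"
begin

text \<open>Points of the (generalised short Weierstrass) curve  c*y^2 = x^3 + a*x + b  over a field,
  with None the point at infinity.\<close>

definition ell_points :: "'a::field \<Rightarrow> 'a \<Rightarrow> 'a \<Rightarrow> ('a \<times> 'a) option set" where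
  "ell_points c a b = {P. case P of None \<Rightarrow> True | Some (x, y) \<Rightarrow> c * y^2 = x^3 + a * x + b}"

text \<open>Chord-and-tangent addition on  c*y^2 = x^3 + a*x + b  (odd characteristic, c nonzero).\<close>

definition ell_add :: "'a::field \<Rightarrow> 'a \<Rightarrow> 'a \<Rightarrow> ('a \<times> 'a) option \<Rightarrow> ('a \<times> 'a) option \<Rightarrow> ('a \<times> 'a) option" where
  "ell_add c a b P Q =
     (case P of None \<Rightarrow> Q
      | Some (x1, y1) \<Rightarrow>
        (case Q of None \<Rightarrow> P
         | Some (x2, y2) \<Rightarrow>
             (if x1 \<noteq> x2 then
                (let l = (y2 - y1) / (x2 - x1); x3 = c * l^2 - x1 - x2
                 in Some (x3, l * (x1 - x3) - y1))
              else if y1 + y2 = 0 then None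
              else
                (let l = (3 * x1^2 + a) / (2 * c * y1); x3 = c * l^2 - 2 * x1
                 in Some (x3, l * (x1 - x3) - y1)))))"

definition ell_group :: "'a::field \<Rightarrow> 'a \<Rightarrow> 'a \<Rightarrow> ('a \<times> 'a) option monoid" where
  "ell_group c a b = \<lparr>carrier = ell_points c a b, monoid.mult = ell_add c a b, one = None\<rparr>"

end

theory Submission
  imports Defs "HOL-Number_Theory.Number_Theory"
begin

(* If s^2 = c with s nonzero, then (x, y) \<mapsto> (x, s y) maps c y^2 = x^3 + a x + b onto
   y^2 = x^3 + a x + b, and chord-and-tangent addition commutes with it; so it suffices that 30 is
   a square modulo the prime q = p^2 16^n + 1.  As p is odd, primality of q forces n > 0, hence
   q \<equiv> 1 (mod 8) and 2 is a quadratic residue.  Since p \<equiv> \<plusminus>1 (mod 5) and 3 does not divide p,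
   q \<equiv> 2 modulo 3 and modulo 5; as q \<equiv> 1 (mod 4), reciprocity gives (3/q) = (2/3) = -1 and
   (5/q) = (2/5) = -1.  Thus (30/q) = 1. *)

definition ell_scale :: "'a::field \<Rightarrow> ('a \<times> 'a) option \<Rightarrow> ('a \<times> 'a) option" where
  "ell_scale s = map_option (\<lambda>(x, y). (x, s * y))"

lemma ell_scale_inverse [simp]:
  fixes s :: "'a::field"
  assumes "s \<noteq> 0"
  shows "ell_scale (inverse s) (ell_scale s P) = P"
  using assms by (cases P) (auto simp: ell_scale_def)

lemma ell_scale_mem_points:
  fixes s c c' :: "'a::field"
  assumes "c = c' * s^2" and "P \<in> ell_points c a b"
  shows "ell_scale s P \<in> ell_points c' a b"
  using assms by (cases P) (auto simp: ell_scale_def ell_points_def power_mult_distrib mult.assoc)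

lemma ell_scale_add:
  fixes s c c' :: "'a::field"
  assumes s: "s \<noteq> 0" and c: "c = c' * s^2"
  shows "ell_scale s (ell_add c a b P Q) = ell_add c' a b (ell_scale s P) (ell_scale s Q)"
proof (cases "P = None \<or> Q = None")
  case True
  then show ?thesis
    by (auto simp: ell_add_def ell_scale_def split: option.split)
next
  case False
  then obtain x1 y1 x2 y2 where P: "P = Some (x1, y1)" and Q: "Q = Some (x2, y2)"
    by auto
  have scaled: "ell_scale s P = Some (x1, s * y1)" "ell_scale s Q = Some (x2, s * y2)"
    by (simp_all add: P Q ell_scale_def)
  \<comment> \<open>Chord and tangent both return the third point on a line of slope \<open>l\<close> through
    \<open>(x1, y1)\<close>; scaling \<open>y\<close> by \<open>s\<close> turns the slope into \<open>s * l\<close>.\<close>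
  have line: "ell_scale s (Some (c * l^2 - x, l * (x1 - (c * l^2 - x)) - y1))
      = Some (c' * (s * l)^2 - x, (s * l) * (x1 - (c' * (s * l)^2 - x)) - s * y1)" for l x
    by (simp add: ell_scale_def c power_mult_distrib right_diff_distrib mult.assoc)
  consider (chord) "x1 \<noteq> x2" | (opposite) "x1 = x2" "y1 + y2 = 0" | (tangent) "x1 = x2" "y1 + y2 \<noteq> 0"
    by blast
  then show ?thesis
  proof cases
    case chord
    define l where "l = (y2 - y1) / (x2 - x1)"
    have slope: "(s * y2 - s * y1) / (x2 - x1) = s * l"
      by (simp add: l_def right_diff_distrib)
    have "ell_scale s (ell_add c a b P Q)
        = ell_scale s (Some (c * l^2 - (x1 + x2), l * (x1 - (c * l^2 - (x1 + x2))) - y1))"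
      using chord by (simp add: P Q ell_add_def Let_def l_def diff_diff_eq)
    also have "\<dots> = Some (c' * (s * l)^2 - (x1 + x2), (s * l) * (x1 - (c' * (s * l)^2 - (x1 + x2))) - s * y1)"
      by (rule line)
    also have "\<dots> = ell_add c' a b (ell_scale s P) (ell_scale s Q)"
      using chord unfolding scaled ell_add_def option.case prod.case Let_def slope
      by (simp add: diff_diff_eq)
    finally show ?thesis .
  next
    case opposite
    then show ?thesis
      by (simp add: P Q scaled ell_add_def ell_scale_def flip: distrib_left)
  next
    case tangent
    define l where "l = (3 * x1^2 + a) / (2 * c * y1)"
    have slope: "(3 * x1^2 + a) / (2 * c' * (s * y1)) = s * l"
      using s by (simp add: l_def c power2_eq_square)
    have "s * y1 + s * y2 \<noteq> 0"
      using s tangent(2) by (simp flip: distrib_left)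
    have "ell_scale s (ell_add c a b P Q)
        = ell_scale s (Some (c * l^2 - 2 * x1, l * (x1 - (c * l^2 - 2 * x1)) - y1))"
      using tangent by (simp add: P Q ell_add_def Let_def l_def)
    also have "\<dots> = Some (c' * (s * l)^2 - 2 * x1, (s * l) * (x1 - (c' * (s * l)^2 - 2 * x1)) - s * y1)"
      by (rule line)
    also have "\<dots> = ell_add c' a b (ell_scale s P) (ell_scale s Q)"
      using tangent \<open>s * y1 + s * y2 \<noteq> 0\<close>
      unfolding scaled ell_add_def option.case prod.case Let_def slope by simp
    finally show ?thesis .
  qed
qed

lemma ell_group_iso_scale:
  fixes s c c' :: "'a::field"
  assumes s: "s \<noteq> 0" and c: "c = c' * s^2"
  shows "ell_group c a b \<cong> ell_group c' a b"
proof (rule is_isoI)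
  have c': "c' = c * (inverse s)^2"
    using s by (simp add: c power_inverse)
  have scale_inverse: "ell_scale s (ell_scale (inverse s) P) = P" for P
    using ell_scale_inverse[of "inverse s" P] s by simp
  have "bij_betw (ell_scale s) (ell_points c a b) (ell_points c' a b)"
    by (rule bij_betw_byWitness[where f' = "ell_scale (inverse s)"])
      (auto simp: s scale_inverse intro: ell_scale_mem_points[OF c] ell_scale_mem_points[OF c'])
  then show "ell_scale s \<in> iso (ell_group c a b) (ell_group c' a b)"
    using ell_scale_mem_points[OF c] ell_scale_add[OF s c]
    by (auto simp: iso_def hom_def ell_group_def bij_betw_def)
qed

lemma Legendre_cases: "Legendre a m \<in> {-1, 0, 1}"
  by (simp add: Legendre_def)

lemma Legendre_eqI_cong:
  assumes "[Legendre a m = x] (mod m)" and "x \<in> {-1, 0, 1}" and "m > 2"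
  shows "Legendre a m = x"
proof -
  have "m dvd Legendre a m - x" and "\<bar>Legendre a m - x\<bar> < m"
    using assms Legendre_cases[of a m] by (auto simp: cong_iff_dvd_diff)
  then have "Legendre a m - x = 0"
    using dvd_imp_le_int[of "Legendre a m - x" m] by force
  then show ?thesis
    by simp
qed

lemma Legendre_cong:
  assumes "[a = b] (mod m)"
  shows "Legendre a m = Legendre b m"
proof -
  have "[a = 0] (mod m) \<longleftrightarrow> [b = 0] (mod m)" and "QuadRes m a \<longleftrightarrow> QuadRes m b"
    using assms unfolding QuadRes_def by (meson cong_sym cong_trans)+
  then show ?thesis
    by (simp add: Legendre_def)
qed

lemma Legendre_mult:
  fixes q :: nat
  assumes "prime q" and "q > 2"
  shows "Legendre (a * b) q = Legendre a q * Legendre b q"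
proof (rule Legendre_eqI_cong)
  have "[Legendre (a * b) q = a ^ ((q - 1) div 2) * b ^ ((q - 1) div 2)] (mod q)"
    using euler_criterion[OF assms, of "a * b"] by (simp add: power_mult_distrib)
  also have "[a ^ ((q - 1) div 2) * b ^ ((q - 1) div 2) = Legendre a q * Legendre b q] (mod q)"
    by (intro cong_mult; rule cong_sym, rule euler_criterion[OF assms])
  finally show "[Legendre (a * b) q = Legendre a q * Legendre b q] (mod q)" .
  show "Legendre a q * Legendre b q \<in> {-1, 0, 1}"
    using Legendre_cases[of a q] Legendre_cases[of b q] by auto
qed (use assms in simp)

lemma Legendre_eq_1_if_cong_power_half:
  fixes q :: nat and a :: int
  assumes "prime q" and "q > 2" and "[a ^ ((q - 1) div 2) = 1] (mod q)"
  shows "Legendre a q = 1"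
proof (rule Legendre_eqI_cong)
  show "[Legendre a q = 1] (mod q)"
    using euler_criterion[OF assms(1,2)] assms(3) by (rule cong_trans)
qed (use assms in auto)

lemma Legendre_minus_one_if_cong_1_mod_4:
  fixes q :: nat
  assumes "prime q" and "[q = 1] (mod 4)"
  shows "Legendre (-1) q = 1"
proof -
  have "q mod 4 = 1" and "q > 1"
    using assms prime_gt_1_nat[of q] by (simp_all add: cong_def)
  then have "q > 2" and "even ((q - 1) div 2)"
    by presburger+
  then show ?thesis
    using assms by (intro Legendre_eq_1_if_cong_power_half) simp_all
qed

lemma Legendre_two_if_cong_1_mod_8:
  fixes q :: nat
  assumes q: "prime q" and q8: "[q = 1] (mod 8)"
  shows "Legendre 2 q = 1"
proof -
  have "q mod 8 = 1" and "q > 1"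
    using q8 prime_gt_1_nat[OF q] by (simp_all add: cong_def)
  then have q2: "q > 2" and "[q = 1] (mod 4)" and four_dvd: "4 dvd (q - 1) div 2"
    unfolding cong_def by presburger+
  then have "QuadRes q (-1)"
    using Legendre_minus_one_if_cong_1_mod_4[OF q] by (simp add: Legendre_def split: if_splits)
  then obtain i where i: "[i^2 = -1] (mod q)"
    by (auto simp: QuadRes_def)
  \<comment> \<open>A square root \<open>i\<close> of \<open>-1\<close> is itself a square because \<open>8\<close> divides \<open>q - 1\<close>,
    and \<open>(1 + i)^2 = 2 i\<close>.\<close>
  obtain k where k: "(q - 1) div 2 = 2 * (2 * k)"
    using four_dvd by (auto elim!: dvdE)
  have "[i ^ ((q - 1) div 2) = (i^2) ^ (2 * k)] (mod q)"
    unfolding k power_mult by (rule cong_refl)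
  also have "[(i^2) ^ (2 * k) = (-1) ^ (2 * k)] (mod q)"
    using i by (rule cong_pow)
  finally have "Legendre i q = 1"
    using q q2 by (intro Legendre_eq_1_if_cong_power_half) simp_all
  then have "Legendre 2 q = Legendre (2 * i) q"
    by (simp add: Legendre_mult[OF q q2])
  moreover have "[(1 + 2 * i) + i^2 = (1 + 2 * i) + -1] (mod q)"
    using i by (rule cong_add[OF cong_refl])
  then have "[(1 + i)^2 = 2 * i] (mod q)"
    by (simp add: power2_eq_square algebra_simps)
  then have "QuadRes q (2 * i)"
    unfolding QuadRes_def by blast
  moreover have "\<not> [2 = 0] (mod int q)"
    using q2 by (auto simp: cong_0_iff dest: zdvd_imp_le)
  ultimately show ?thesis
    by (auto simp: Legendre_def split: if_splits)
qed

lemma Legendre_prime_if_cong_1_mod_4: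
  fixes q r b :: nat
  assumes r: "prime r" "r > 2" and q: "prime q" "[q = 1] (mod 4)"
    and "q \<noteq> r" and "[q = b] (mod r)"
  shows "Legendre r q = Legendre b r"
proof -
  have "q mod 4 = 1" and "q > 1"
    using q prime_gt_1_nat[of q] by (simp_all add: cong_def)
  then have "q > 2" and "even ((q - 1) div 2)"
    by presburger+
  moreover have "r \<noteq> q"
    using \<open>q \<noteq> r\<close> by simp
  ultimately have "Legendre r q * Legendre q r = 1"
    using Quadratic_Reciprocity[OF r q(1)] by simp
  then have "Legendre r q = Legendre q r"
    using Legendre_cases[of r q] Legendre_cases[of q r] by auto
  also have "\<dots> = Legendre b r"
    using \<open>[q = b] (mod r)\<close> by (intro Legendre_cong) (simp add: cong_int_iff)
  finally show ?thesis .
qed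

lemma Legendre_2_3: "Legendre 2 3 = -1"
proof -
  have "(y mod 3)^2 mod 3 \<noteq> 2" for y :: int
  proof -
    have "y mod 3 \<in> {0, 1, 2}"
      by auto
    then show ?thesis
      by auto
  qed
  then show ?thesis
    by (simp add: Legendre_def QuadRes_def cong_def power_mod)
qed

lemma Legendre_2_5: "Legendre 2 5 = -1"
proof -
  have "(y mod 5)^2 mod 5 \<noteq> 2" for y :: int
  proof -
    have "y mod 5 \<in> {0, 1, 2, 3, 4}"
      by auto
    then show ?thesis
      by auto
  qed
  then show ?thesis
    by (simp add: Legendre_def QuadRes_def cong_def power_mod)
qed

lemma Legendre_30_eq_1:
  fixes q :: nat
  assumes q: "prime q" and q8: "[q = 1] (mod 8)"
    and q3: "[q = 2] (mod 3)" and q5: "[q = 2] (mod 5)"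
  shows "Legendre 30 q = 1"
proof -
  have "q mod 8 = 1"
    using q8 by (simp add: cong_def)
  then have q4: "[q = 1] (mod 4)" and "q > 2"
    using prime_gt_1_nat[OF q] unfolding cong_def by presburger+
  have "q \<noteq> 3" and "q \<noteq> 5"
    using q3 q5 by (auto simp: cong_def)
  have "Legendre 3 q = -1"
    using Legendre_prime_if_cong_1_mod_4[of 3 q 2] q q4 q3 \<open>q \<noteq> 3\<close> Legendre_2_3 by simp
  moreover have "Legendre 5 q = -1"
    using Legendre_prime_if_cong_1_mod_4[of 5 q 2] q q4 q5 \<open>q \<noteq> 5\<close> Legendre_2_5 by simp
  moreover have "Legendre (2 * (3 * 5)) q = Legendre 2 q * (Legendre 3 q * Legendre 5 q)"
    by (simp only: Legendre_mult[OF q \<open>q > 2\<close>])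
  ultimately show ?thesis
    using Legendre_two_if_cong_1_mod_8[OF q q8] by simp
qed

lemma square_cong_1_mod_3:
  fixes p :: nat
  assumes "\<not> 3 dvd p"
  shows "[p^2 = 1] (mod 3)"
proof -
  have "p mod 3 = 1 \<or> p mod 3 = 2"
    using assms by presburger
  then have "(p mod 3)^2 mod 3 = 1"
    by auto
  then show ?thesis
    by (simp add: cong_def power_mod)
qed

lemma square_cong_1_mod_5:
  fixes p :: nat
  assumes "p mod 5 = 1 \<or> p mod 5 = 4"
  shows "[p^2 = 1] (mod 5)"
proof -
  have "(p mod 5)^2 mod 5 = 1"
    using assms by auto
  then show ?thesis
    by (simp add: cong_def power_mod)
qed

lemma prime_S_congruences:
  fixes p n :: nat
  assumes p: "prime p" and p10: "p mod 10 = 1 \<or> p mod 10 = 9"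
    and S: "prime (p^2 * 16^n + 1)"
  shows "[p^2 * 16^n + 1 = 1] (mod 8)" and "[p^2 * 16^n + 1 = 2] (mod 3)"
    and "[p^2 * 16^n + 1 = 2] (mod 5)"
proof -
  have "odd p"
    using p10 by presburger
  have "n \<noteq> 0"
  proof
    assume "n = 0"
    moreover have "p^2 + 1 > 2"
      using one_less_power[OF prime_gt_1_nat[OF p], of 2] by simp
    ultimately show False
      using S prime_odd_nat[of "p^2 + 1"] \<open>odd p\<close> by simp
  qed
  then have "8 dvd p^2 * 16^n"
    by (cases n) auto
  then have "[p^2 * 16^n + 1 = 0 + 1] (mod 8)"
    by (intro cong_add) (simp_all add: cong_0_iff)
  then show "[p^2 * 16^n + 1 = 1] (mod 8)"
    by simp
  have "p \<noteq> 3"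
    using p10 by auto
  then have "\<not> 3 dvd p"
    using primes_dvd_imp_eq[of 3 p] p by auto
  have "[p^2 * 16^n + 1 = 1 * 1^n + 1] (mod 3)"
    using square_cong_1_mod_3[OF \<open>\<not> 3 dvd p\<close>]
    by (intro cong_add cong_mult cong_pow) (simp_all add: cong_def)
  then show "[p^2 * 16^n + 1 = 2] (mod 3)"
    by (simp only: power_one mult_1 one_add_one)
  have "p mod 5 = 1 \<or> p mod 5 = 4"
    using p10 by presburger
  then have "[p^2 * 16^n + 1 = 1 * 1^n + 1] (mod 5)"
    using square_cong_1_mod_5
    by (intro cong_add cong_mult cong_pow) (simp_all add: cong_def)
  then show "[p^2 * 16^n + 1 = 2] (mod 5)"
    by (simp only: power_one mult_1 one_add_one)
qed

lemma CHAR_eq_CARD_if_prime: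
  assumes "prime CARD('a::{finite,field})"
  shows "CHAR('a) = CARD('a)"
  using CHAR_dvd_CARD[where 'a='a] CHAR_not_1'[where 'a='a] assms
  by (metis prime_nat_iff One_nat_def)

lemma nonzero_sqrt_if_Legendre_eq_1:
  fixes a :: int
  assumes char: "CHAR('a::field) = q" and "Legendre a q = 1"
  shows "\<exists>s::'a. s \<noteq> 0 \<and> s^2 = of_int a"
proof -
  from assms obtain y where y: "[y^2 = a] (mod q)" and a: "\<not> [a = 0] (mod q)"
    by (auto simp: Legendre_def QuadRes_def split: if_splits)
  have "of_int (y^2 - a) = (0::'a)"
    using y unfolding of_int_eq_0_iff_char_dvd char cong_iff_dvd_diff .
  moreover have "of_int a \<noteq> (0::'a)"
    using a unfolding of_int_eq_0_iff_char_dvd char cong_0_iff .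
  ultimately show ?thesis
    by (intro exI[of _ "of_int y"]) auto
qed

theorem lemma4:
  fixes p n :: nat
  assumes "prime p"
    and "p mod 10 = 1 \<or> p mod 10 = 9"
    and "prime (p^2 * 16^n + 1)"
    and "CARD('a) = p^2 * 16^n + 1"
  shows "ell_group (30::'a::{finite,field}) (-1) 0 \<cong> ell_group (1::'a) (-1) 0"
proof -
  have "CHAR('a) = p^2 * 16^n + 1"
    using CHAR_eq_CARD_if_prime[where 'a='a] assms(3,4) by simp
  moreover have "Legendre 30 (p^2 * 16^n + 1) = 1"
    using Legendre_30_eq_1[OF assms(3) prime_S_congruences[OF assms(1-3)]] .
  ultimately obtain s :: 'a where "s \<noteq> 0" and "s^2 = of_int 30"
    by (blast dest: nonzero_sqrt_if_Legendre_eq_1)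
  then show ?thesis
    using ell_group_iso_scale[of s 30 1 "-1" 0] by simp
qed

end
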